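(* Let $\mathcal S,\mathcal R,\mathcal U\subset\mathbb Z^2$ be finite nonempty shapes. Suppose $X\subseteq\mathbb Z^2$ is an infinite $\mathcal S$-DDC with $m$ dots. Then there exists $t\in\mathbb Z^2$ such that the copy $\mathcal U+t$ contains at least $$\frac{m}{|\mathcal S|\cdot|\mathcal R|}\,\Delta(\mathcal S,\mathcal R)\,\Delta(\mathcal R,\mathcal U)$$ points of $X$.
   Context: Work in the square grid $\mathbb Z^2$. A shape is a finite nonempty subset of $\mathbb Z^2$. Copies of a shape $\mathcal S$ are its translates $\mathcal S+t$, $t\in\mathbb Z^2$. $|\mathcal S|$ is the number of grid points of $\mathcal S$. $\Delta(\mathcal S,\mathcal R)=\max_{t\in\mathbb Z^2}|\mathcal S\cap(\mathcal R+t)|$ is the largest intersection of $\mathcal S$ with a copy of $\mathcal R$. A finite set $Y$ of grid points ("dots") is a distinct difference configuration (DDC) if the vectors $y-y'$, over ordered pairs $(y,y')$ of distinct points of $Y$, are pairwise distinct. Equivalently, all lines joining pairs of dots differ in length or slope. A set $X\subseteq\mathbb Z^2$ is an infinite $\mathcal S$-DDC with $m$ dots if for every $t\in\mathbb Z^2$ the set $X\cap(\mathcal S+t)$ has exactly $m$ elements and is a DDC. *)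

theory Defs
  imports Complex_Main
begin

type_synonym point = "int \<times> int"

definition tr :: "point set \<Rightarrow> point \<Rightarrow> point set" where
  "tr S t = (\<lambda>s. (fst s + fst t, snd s + snd t)) ` S"

definition shape :: "point set \<Rightarrow> bool" where
  "shape S \<longleftrightarrow> finite S \<and> S \<noteq> {}"

definition Delta :: "point set \<Rightarrow> point set \<Rightarrow> nat" where
  "Delta S R = Max (range (\<lambda>t. card (S \<inter> tr R t)))"

definition diff :: "point \<Rightarrow> point \<Rightarrow> point" where
  "diff y y' = (fst y - fst y', snd y - snd y')"

definition is_DDC :: "point set \<Rightarrow> bool" where
  "is_DDC Y \<longleftrightarrow> finite Y \<and>
     (\<forall>a\<in>Y. \<forall>b\<in>Y. \<forall>c\<in>Y. \<forall>d\<in>Y. a \<noteq> b \<longrightarrow> c \<noteq> d \<longrightarrow>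
        diff a b = diff c d \<longrightarrow> a = c \<and> b = d)"

definition infinite_DDC :: "point set \<Rightarrow> nat \<Rightarrow> point set \<Rightarrow> bool" where
  "infinite_DDC S m X \<longleftrightarrow>
     (\<forall>t. card (X \<inter> tr S t) = m \<and> is_DDC (X \<inter> tr S t))"

end

theory Submission
  imports Defs
begin

(*
  The bound follows from a double-counting argument, without using the
  distinct-difference property of X.  Every copy S + u contains exactly m
  dots, so counting pairs (s, u) in S \<times> U with u + s \<in> X in two ways gives
      \<Sum>s\<in>S. |X \<inter> (U + s)|  =  \<Sum>u\<in>U. |X \<inter> (S + u)|  =  m |U|.
  By averaging, some copy U + s therefore contains at least m |U| / |S| dots.
  Since a copy of R meets S in at most |R| points and a copy of U meets R in
  at most |U| points, Delta(S,R) \<le> |R| and Delta(R,U) \<le> |U|, so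
      m / (|S| |R|) * Delta(S,R) * Delta(R,U)  \<le>  m |U| / |S|.
*)

definition padd :: "point \<Rightarrow> point \<Rightarrow> point" where
  "padd a b = (fst a + fst b, snd a + snd b)"

lemma tr_eq_image: "tr A t = (\<lambda>a. padd a t) ` A"
  by (simp add: tr_def padd_def)

lemma inj_padd: "inj (\<lambda>a. padd a t)"
  by (auto simp: inj_def padd_def prod_eq_iff)

lemma padd_commute: "padd a b = padd b a"
  by (simp add: padd_def add.commute)

lemma card_tr: "card (tr A t) = card A"
  unfolding tr_eq_image by (rule card_image[OF inj_on_subset[OF inj_padd]]) simp

lemma card_inter_tr: "card (X \<inter> tr A t) = card {a \<in> A. padd a t \<in> X}"
proof -
  have "X \<inter> tr A t = (\<lambda>a. padd a t) ` {a \<in> A. padd a t \<in> X}"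
    by (auto simp: tr_eq_image)
  then show ?thesis
    by (simp add: card_image[OF inj_on_subset[OF inj_padd]])
qed

text \<open>Double counting: summing the dots in the copies of A placed at the points
  of B equals summing the dots in the copies of B placed at the points of A,
  since both count the pairs (a, b) with a + b in X.\<close>

lemma double_counting:
  assumes "finite A" and "finite B"
  shows "(\<Sum>b\<in>B. card (X \<inter> tr A b)) = (\<Sum>a\<in>A. card (X \<inter> tr B a))"
proof -
  have "(\<Sum>b\<in>B. card (X \<inter> tr A b)) = card (Sigma B (\<lambda>b. {a \<in> A. padd a b \<in> X}))"
    using assms by (simp add: card_SigmaI card_inter_tr)
  also have "Sigma B (\<lambda>b. {a \<in> A. padd a b \<in> X})
           = prod.swap ` Sigma A (\<lambda>a. {b \<in> B. padd b a \<in> X})"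
    by (force simp: padd_commute)
  also have "card \<dots> = card (Sigma A (\<lambda>a. {b \<in> B. padd b a \<in> X}))"
    by (rule card_image) simp
  also have "\<dots> = (\<Sum>a\<in>A. card (X \<inter> tr B a))"
    using assms by (simp add: card_SigmaI card_inter_tr)
  finally show ?thesis .
qed

lemma exists_ge_average:
  fixes f :: "'a \<Rightarrow> real"
  assumes "finite A" and "A \<noteq> {}"
  shows "\<exists>a\<in>A. sum f A / real (card A) \<le> f a"
proof (rule ccontr)
  assume "\<not> ?thesis"
  then have "\<And>a. a \<in> A \<Longrightarrow> f a < sum f A / real (card A)"
    by (simp add: not_le)
  then have "sum f A < (\<Sum>a\<in>A. sum f A / real (card A))"
    by (rule sum_strict_mono[OF assms])
  also have "\<dots> = sum f A"
    using assms by simp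
  finally show False
    by simp
qed

lemma Delta_le_card:
  assumes "finite R"
  shows "Delta S R \<le> card R"
proof -
  have bound: "card (S \<inter> tr R t) \<le> card R" for t
    using assms by (metis card_mono card_tr finite_imageI inf_le2 tr_eq_image)
  have "finite (range (\<lambda>t. card (S \<inter> tr R t)))"
    by (rule finite_subset[of _ "{0..card R}"]) (use bound in auto)
  then have "Delta S R \<in> range (\<lambda>t. card (S \<inter> tr R t))"
    unfolding Delta_def by (rule Max_in) simp
  then show ?thesis
    using bound by auto
qed

lemma averaging_copy:
  assumes "shape S" and "shape U"
    and copies: "\<And>t. card (X \<inter> tr S t) = m"
  shows "\<exists>t. real m * real (card U) / real (card S) \<le> real (card (X \<inter> tr U t))"
proof -
  have S: "finite S" "S \<noteq> {}" and U: "finite U"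
    using assms(1,2) by (auto simp: shape_def)
  have "(\<Sum>s\<in>S. card (X \<inter> tr U s)) = m * card U"
    using double_counting[OF U S(1)] copies by simp
  then have "(\<Sum>s\<in>S. real (card (X \<inter> tr U s))) = real m * real (card U)"
    by (metis of_nat_mult of_nat_sum)
  with exists_ge_average[OF S, of "\<lambda>s. real (card (X \<inter> tr U s))"] show ?thesis
    by auto
qed

theorem mainTheorem8:
  fixes S R U X :: "(int \<times> int) set" and m :: nat
  assumes "shape S" and "shape R" and "shape U"
    and "infinite_DDC S m X"
  shows "\<exists>t. real (card (X \<inter> tr U t)) \<ge>
           real m / (real (card S) * real (card R)) * real (Delta S R) * real (Delta R U)"
proof -
  obtain t where t: "real m * real (card U) / real (card S) \<le> real (card (X \<inter> tr U t))"
    using averaging_copy[OF assms(1,3)] assms(4) unfolding infinite_DDC_def by blast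
  have pos: "real (card S) > 0" "real (card R) > 0"
    using assms(1,2) by (auto simp: shape_def card_gt_0_iff)
  have "real (Delta S R) \<le> real (card R)" "real (Delta R U) \<le> real (card U)"
    using assms(2,3) Delta_le_card by (auto simp: shape_def)
  then have "real m / (real (card S) * real (card R)) * real (Delta S R) * real (Delta R U)
      \<le> real m / (real (card S) * real (card R)) * real (card R) * real (card U)"
    using pos by (intro mult_mono) auto
  also have "\<dots> = real m * real (card U) / real (card S)"
    using pos by (simp add: field_simps)
  finally show ?thesis
    using t by (meson order_trans)
qed

end
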